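(* Let $p,q$ be positive integers with $p+q$ odd. For all $n\ge1$: (a) $y_n,[p]_n,[q]_n\in\mathcal{J}^{p,q}_n$; (b) $\psi_n(y_n)=1$, $\psi_n([p]_n)=p$, $\psi_n([q]_n)=q$ in $\mathbb{Z}_{2^{\lfloor n/2\rfloor}}$; (c) $\Delta_n(y_n)=(0,p-q)$, $\Delta_n([p]_n)=(1,p(p-q))$, $\Delta_n([q]_n)=(1,q(p-q))$ in $D_{2^{\lfloor n/2\rfloor+1}}$ (integers reduced modulo $2^{\lfloor n/2\rfloor}$).
   Context: Let $p,q$ be positive integers with $p+q$ odd. $\mathbb{Z}_{2^k}$ denotes the integers modulo $2^k$ ($\mathbb{Z}_1$ trivial); as $p+q$ is odd, division by $p+q$ and $(p+q)^2$ is well defined in $\mathbb{Z}_{2^k}$. For $m\ge1$, $D_{2m}$ is the dihedral group of order $2m$, realized as pairs $(f,x)$, $f\in\mathbb{Z}_2$, $x\in\mathbb{Z}_m$, with product $(f_1,x_1)(f_2,x_2)=(f_1+f_2,x_1+(-1)^{f_1}x_2)$. Define $\Phi:D_{2m}\to D_{2m}$, $\Phi((f,x))=(f,\delta(f=1)(p+q)(p-q)-x)$, where $\delta(f=1)$ is $1$ if $f=1$ and $0$ otherwise. $\mathrm{Aut}(T_1)$ is the trivial group $\{e\}$; for $k\ge1$, $\mathrm{Aut}(T_{k+1})$ is the set of triples $g=(g_f,g_L,g_R)$, $g_f\in\mathbb{Z}_2$, $g_L,g_R\in\mathrm{Aut}(T_k)$, with product $(f,A,B)(g,C,D)=(f+g,AC,BD)$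 if $f=0$ and $(f+g,AD,BC)$ if $f=1$; subscripts chain ($g_{LR}=(g_L)_R$, $g_{Lf}=(g_L)_f$). Recursively: $\mathcal{J}_1=\mathrm{Aut}(T_2)$, $\psi_1=0$, $\Delta_1(g)=(g_f,0)$; $\mathcal{J}_2=\{g\in\mathrm{Aut}(T_3):g_L=g_R\}$, $\psi_2(g)=\delta(g_{Lf}=1)\in\mathbb{Z}_2$, $\Delta_2(g)=(g_f,\psi_2(g))$; for $n\ge3$, $\mathcal{J}_n=\{g\in\mathrm{Aut}(T_{n+1}):g_L,g_R\in\mathcal{J}_{n-1},\ \Delta_{n-1}(g_L)=\Phi(\Delta_{n-1}(g_R))\}$, with $\psi_n:\mathcal{J}_n\to\mathbb{Z}_{2^{\lfloor n/2\rfloor}}$ given by $\psi_n(g)=(\psi_{n-1}(g_L)+\psi_{n-1}(g_R))/(p+q)$ for odd $n$ and $\psi_n(g)=\big(2(\psi_{n-2}(g_{LL})+\psi_{n-2}(g_{RL}))-\delta(g_{Lf}=1)(p+q)(p-q)\big)/(p+q)^2$ for even $n$ (with $2\psi_{n-2}(\cdot)$ read in $\mathbb{Z}_{2^{n/2}}$), and $\Delta_n:\mathcal{J}_n\to D_{2^{\lfloor n/2\rfloor+1}}$ given by $\Delta_n(g)=(g_f,\psi_{n-1}(g_L)-\psi_{n-1}(g_R))$ for odd $n$ and $\Delta_n(g)=(g_f,(p+q)\psi_n(g)-2\psi_{n-1}(g_R))$ for even $n$. Elements $[p]_n,[q]_n\in\mathrm{Aut}(T_{n+1})$: $[p]_1=[q]_1=(1,e,e)$,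 and for $n\ge2$, $[p]_n=(1,[p]_{n-1}^{\,p},[q]_{n-1}^{\,p})$, $[q]_n=(1,[p]_{n-1}^{\,q},[q]_{n-1}^{\,q})$ (powers in $\mathrm{Aut}(T_n)$). Also $y_n=(0,[p]_{n-1},[q]_{n-1})$ for $n\ge2$, and $y_1=(0,e,e)$ is the identity of $\mathrm{Aut}(T_2)$. *)

theory Defs
  imports "HOL-Number_Theory.Cong"
begin

text \<open>AE is the unique element of Aut(T_1); AN f A B is the triple (f,A,B).
  The flag f = True stands for 1 in Z_2.\<close>
datatype aut = AE | AN bool aut aut

text \<open>autlev n g: g belongs to Aut(T_(n+1)).\<close>
fun autlev :: "nat \<Rightarrow> aut \<Rightarrow> bool" where
  "autlev 0 g = (g = AE)"
| "autlev (Suc n) AE = False"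
| "autlev (Suc n) (AN f a b) = (autlev n a \<and> autlev n b)"

fun af :: "aut \<Rightarrow> bool" where "af AE = False" | "af (AN f a b) = f"
fun aL :: "aut \<Rightarrow> aut" where "aL AE = AE" | "aL (AN f a b) = a"
fun aR :: "aut \<Rightarrow> aut" where "aR AE = AE" | "aR (AN f a b) = b"

fun amult :: "aut \<Rightarrow> aut \<Rightarrow> aut" where
  "amult (AN f A B) (AN g C D) =
     (if f then AN (f \<noteq> g) (amult A D) (amult B C)
           else AN (f \<noteq> g) (amult A C) (amult B D))"
| "amult x y = AE"

fun aid :: "nat \<Rightarrow> aut" where
  "aid 0 = AE"
| "aid (Suc n) = AN False (aid n) (aid n)"

fun apow :: "nat \<Rightarrow> aut \<Rightarrow> nat \<Rightarrow> aut" where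
  "apow n g 0 = aid n"
| "apow n g (Suc r) = amult g (apow n g r)"

text \<open>Division by a (odd) in Z_(2^k): the canonical representative y with a*y = x.\<close>
definition zdiv :: "nat \<Rightarrow> int \<Rightarrow> int \<Rightarrow> int" where
  "zdiv k a x = (THE y. 0 \<le> y \<and> y < 2 ^ k \<and> [a * y = x] (mod 2 ^ k))"

text \<open>Elements of D_(2m) as pairs (f,x); equality in D_(2m) with x read mod m.\<close>
definition deq :: "int \<Rightarrow> bool \<times> int \<Rightarrow> bool \<times> int \<Rightarrow> bool" where
  "deq m u v = (fst u = fst v \<and> [snd u = snd v] (mod m))"

definition Phi :: "nat \<Rightarrow> nat \<Rightarrow> bool \<times> int \<Rightarrow> bool \<times> int" where
  "Phi p q u = (fst u, (if fst u then (int p + int q) * (int p - int q) else 0) - snd u)"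

fun psi :: "nat \<Rightarrow> nat \<Rightarrow> nat \<Rightarrow> aut \<Rightarrow> int" where
  "psi p q 0 g = 0"
| "psi p q (Suc 0) g = 0"
| "psi p q (Suc (Suc 0)) g = (if af (aL g) then 1 else 0)"
| "psi p q (Suc (Suc (Suc k))) g =
     (if odd (k + 3)
      then zdiv ((k + 3) div 2) (int p + int q)
             (psi p q (k + 2) (aL g) + psi p q (k + 2) (aR g))
      else zdiv ((k + 3) div 2) ((int p + int q) ^ 2)
             (2 * (psi p q (k + 1) (aL (aL g)) + psi p q (k + 1) (aL (aR g)))
              - (if af (aL g) then (int p + int q) * (int p - int q) else 0)))"

text \<open>Delta_n; the second component is to be read modulo 2^(n div 2).\<close>
fun Delta :: "nat \<Rightarrow> nat \<Rightarrow> nat \<Rightarrow> aut \<Rightarrow> bool \<times> int" where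
  "Delta p q 0 g = (af g, 0)"
| "Delta p q (Suc 0) g = (af g, 0)"
| "Delta p q (Suc (Suc 0)) g = (af g, psi p q 2 g)"
| "Delta p q (Suc (Suc (Suc k))) g =
     (if odd (k + 3)
      then (af g, psi p q (k + 2) (aL g) - psi p q (k + 2) (aR g))
      else (af g, (int p + int q) * psi p q (k + 3) g - 2 * psi p q (k + 2) (aR g)))"

fun inJ :: "nat \<Rightarrow> nat \<Rightarrow> nat \<Rightarrow> aut \<Rightarrow> bool" where
  "inJ p q 0 g = False"
| "inJ p q (Suc 0) g = autlev 1 g"
| "inJ p q (Suc (Suc 0)) g = (autlev 2 g \<and> aL g = aR g)"
| "inJ p q (Suc (Suc (Suc k))) g =
     (autlev (k + 3) g \<and> inJ p q (k + 2) (aL g) \<and> inJ p q (k + 2) (aR g) \<and>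
      deq (2 ^ ((k + 2) div 2)) (Delta p q (k + 2) (aL g)) (Phi p q (Delta p q (k + 2) (aR g))))"

text \<open>brk r n = [r]_n in Aut(T_(n+1)), for r \<in> {p,q}; [p]_n = brk p q p n.\<close>
fun brk :: "nat \<Rightarrow> nat \<Rightarrow> nat \<Rightarrow> nat \<Rightarrow> aut" where
  "brk p q r 0 = AE"
| "brk p q r (Suc 0) = AN True AE AE"
| "brk p q r (Suc (Suc k)) =
     AN True (apow (Suc k) (brk p q p (Suc k)) r) (apow (Suc k) (brk p q q (Suc k)) r)"

definition yel :: "nat \<Rightarrow> nat \<Rightarrow> nat \<Rightarrow> aut" where
  "yel p q n = (if n \<le> 1 then AN False AE AE
                else AN False (brk p q p (n - 1)) (brk p q q (n - 1)))"

end

theory Submission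
  imports Defs
begin

(*
  First, J_n is closed under the product of Aut(T_(n+1)), and psi_n and Delta_n are homomorphisms
  from J_n to Z_(2^(n div 2)) and to the dihedral group. Closure holds because Phi is an involutive
  automorphism of the dihedral group, so the compatibility Delta(left child) = Phi(Delta(right child))
  survives products. At odd levels psi_n and Delta_n are linear in the psi-values of the children;
  at even levels psi_n is read off the left grandchildren, which by the compatibility of the children
  pick up -(p+q)(p-q) exactly when the left children of both factors carry a flip; the flip term in the
  definition of psi_n absorbs this.

  Second, for n >= 3 the children of [p]_n, [q]_n and y_n are powers of [p]_(n-1) and [q]_(n-1),
  so the homomorphism property computes their invariants from those at level n-1; at even levels
  the left grandchildren are those of powers of an element with a flip at the root, whose children
  alternate, and the required identity reduces to (p+q)^2 r = 2 (r div 2) (p+q)^2 + [r odd] (p+q)^2.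
*)

lemma zdiv_spec:
  assumes "odd a"
  shows "0 \<le> zdiv k a x \<and> zdiv k a x < 2 ^ k \<and> [a * zdiv k a x = x] (mod 2 ^ k)"
proof -
  have cop: "coprime a (2 ^ k)"
    using assms by simp
  obtain u where u: "[a * u = 1] (mod 2 ^ k)"
    using cong_solve_coprime_int[OF cop] by blast
  have "[a * ((u * x) mod 2 ^ k) = (a * u) * x] (mod 2 ^ k)"
    by (simp add: cong_def mod_mult_right_eq mult.assoc)
  also have "[(a * u) * x = x] (mod 2 ^ k)"
    using cong_scalar_right[OF u, of x] by simp
  finally have ex: "\<exists>y. 0 \<le> y \<and> y < 2 ^ k \<and> [a * y = x] (mod 2 ^ k)"
    by (intro exI[of _ "(u * x) mod 2 ^ k"]) simp
  have uniq: "y = y'" if "0 \<le> y \<and> y < 2 ^ k \<and> [a * y = x] (mod 2 ^ k)"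
    and "0 \<le> y' \<and> y' < 2 ^ k \<and> [a * y' = x] (mod 2 ^ k)" for y y'
  proof -
    have "[a * y = a * y'] (mod 2 ^ k)"
      using that by (metis cong_sym cong_trans)
    then show ?thesis
      using that cong_mult_lcancel[OF cop] cong_less_imp_eq_int by blast
  qed
  have "\<exists>!y. 0 \<le> y \<and> y < 2 ^ k \<and> [a * y = x] (mod 2 ^ k)"
    using ex uniq by blast
  then show ?thesis
    unfolding zdiv_def by (rule theI')
qed

lemma zdiv_cong_iff:
  assumes "odd a"
  shows "[zdiv k a x = y] (mod 2 ^ k) \<longleftrightarrow> [a * y = x] (mod 2 ^ k)"
proof -
  have "[zdiv k a x = y] (mod 2 ^ k) \<longleftrightarrow> [a * zdiv k a x = a * y] (mod 2 ^ k)"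
    using assms by (simp add: cong_mult_lcancel)
  also have "\<dots> \<longleftrightarrow> [a * y = x] (mod 2 ^ k)"
    using zdiv_spec[OF assms] by (metis cong_sym cong_trans)
  finally show ?thesis .
qed

definition dmul :: "bool \<times> int \<Rightarrow> bool \<times> int \<Rightarrow> bool \<times> int" where
  "dmul u v = (fst u \<noteq> fst v, snd u + (if fst u then - snd v else snd v))"

lemma deq_pair [simp]: "deq m (f, x) (g, y) \<longleftrightarrow> f = g \<and> [x = y] (mod m)"
  by (simp add: deq_def)

lemma deq_sym: "deq m u v \<Longrightarrow> deq m v u"
  by (auto simp: deq_def cong_sym)

lemma deq_trans [trans]: "deq m u v \<Longrightarrow> deq m v w \<Longrightarrow> deq m u w"
  by (auto simp: deq_def intro: cong_trans)

lemma deq_dmul: "deq m u u' \<Longrightarrow> deq m v v' \<Longrightarrow> deq m (dmul u v) (dmul u' v')"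
  by (auto simp: deq_def dmul_def intro!: cong_add cong_diff)

lemma deq_Phi: "deq m u v \<Longrightarrow> deq m (Phi p q u) (Phi p q v)"
  by (auto simp: deq_def Phi_def intro!: cong_diff cong_uminus)

lemma Phi_Phi [simp]: "Phi p q (Phi p q u) = u"
  by (simp add: Phi_def)

lemma Phi_dmul: "Phi p q (dmul u v) = dmul (Phi p q u) (Phi p q v)"
  by (auto simp: Phi_def dmul_def)

lemma amult_not_AE:
  assumes "x \<noteq> AE" "y \<noteq> AE"
  shows "amult x y = AN (af x \<noteq> af y)
    (amult (aL x) (if af x then aR y else aL y)) (amult (aR x) (if af x then aL y else aR y))"
  using assms by (cases x; cases y) auto

lemma autlev_Suc: "autlev (Suc n) g \<longleftrightarrow> g \<noteq> AE \<and> autlev n (aL g) \<and> autlev n (aR g)"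
  by (cases g) auto

lemma inJ_imp_autlev: "inJ p q n g \<Longrightarrow> autlev n g"
  by (cases "(p, q, n, g)" rule: inJ.cases) (auto simp: numeral_3_eq_3 numeral_2_eq_2)

lemma inJ_Suc:
  assumes "2 \<le> m"
  shows "inJ p q (Suc m) g \<longleftrightarrow> g \<noteq> AE \<and> inJ p q m (aL g) \<and> inJ p q m (aR g) \<and>
    deq (2 ^ (m div 2)) (Delta p q m (aL g)) (Phi p q (Delta p q m (aR g)))"
proof -
  obtain k where "m = Suc (Suc k)"
    using assms by (metis add_2_eq_Suc le_Suc_ex)
  then show ?thesis
    by (auto simp: numeral_3_eq_3 autlev_Suc dest: inJ_imp_autlev)
qed

lemma psi_odd_level:
  assumes "even k" "2 \<le> k"
  shows "psi p q (Suc k) g = zdiv (k div 2) (int p + int q) (psi p q k (aL g) + psi p q k (aR g))"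
proof -
  obtain j where "k = Suc (Suc j)"
    using assms(2) by (metis add_2_eq_Suc le_Suc_ex)
  moreover have "(j + 3) div 2 = Suc (j div 2)"
    using assms(1) \<open>k = Suc (Suc j)\<close> by presburger
  ultimately show ?thesis
    using assms(1) by simp
qed

lemma Delta_odd_level:
  assumes "even k" "2 \<le> k"
  shows "Delta p q (Suc k) g = (af g, psi p q k (aL g) - psi p q k (aR g))"
proof -
  obtain j where "k = Suc (Suc j)"
    using assms(2) by (metis add_2_eq_Suc le_Suc_ex)
  moreover have "(j + 3) div 2 = Suc (j div 2)"
    using assms(1) \<open>k = Suc (Suc j)\<close> by presburger
  ultimately show ?thesis
    using assms(1) by simp
qed

definition left_grandchildren_psi :: "nat \<Rightarrow> nat \<Rightarrow> nat \<Rightarrow> aut \<Rightarrow> int" where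
  "left_grandchildren_psi p q k g = psi p q k (aL (aL g)) + psi p q k (aL (aR g))"

lemma psi_even_level:
  assumes "even k" "2 \<le> k"
  shows "psi p q (Suc (Suc k)) g = zdiv (Suc (k div 2)) ((int p + int q) ^ 2)
    (2 * left_grandchildren_psi p q k g
     - (if af (aL g) then (int p + int q) * (int p - int q) else 0))"
proof -
  obtain j where "k = Suc j"
    using assms(2) by (cases k) auto
  moreover have "(j + 3) div 2 = Suc (Suc (j div 2))"
    using assms(1) \<open>k = Suc j\<close> by presburger
  ultimately show ?thesis
    using assms by (simp add: left_grandchildren_psi_def)
qed

lemma Delta_even_level:
  assumes "even k" "2 \<le> k"
  shows "Delta p q (Suc (Suc k)) g =
    (af g, (int p + int q) * psi p q (Suc (Suc k)) g - 2 * psi p q (Suc k) (aR g))"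
proof -
  obtain j where "k = Suc j"
    using assms(2) by (cases k) auto
  moreover have "(j + 3) div 2 = Suc (Suc (j div 2))"
    using assms(1) \<open>k = Suc j\<close> by presburger
  ultimately show ?thesis
    using assms by (simp add: numeral_3_eq_3 del: psi.simps)
qed

definition J_hom :: "nat \<Rightarrow> nat \<Rightarrow> nat \<Rightarrow> bool" where
  "J_hom p q n \<longleftrightarrow> (\<forall>g h. inJ p q n g \<longrightarrow> inJ p q n h \<longrightarrow>
     inJ p q n (amult g h) \<and>
     [psi p q n (amult g h) = psi p q n g + psi p q n h] (mod 2 ^ (n div 2)) \<and>
     deq (2 ^ (n div 2)) (Delta p q n (amult g h)) (dmul (Delta p q n g) (Delta p q n h)))"

lemma J_homD:
  assumes "J_hom p q n" "inJ p q n g" "inJ p q n h"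
  shows "inJ p q n (amult g h)"
    and "[psi p q n (amult g h) = psi p q n g + psi p q n h] (mod 2 ^ (n div 2))"
    and "deq (2 ^ (n div 2)) (Delta p q n (amult g h)) (dmul (Delta p q n g) (Delta p q n h))"
  using assms unfolding J_hom_def by blast+

lemma autlev_1: "autlev (Suc 0) g \<longleftrightarrow> (\<exists>f. g = AN f AE AE)"
  by (cases g) auto

lemma inJ_1: "inJ p q 1 g \<longleftrightarrow> (\<exists>f. g = AN f AE AE)"
  by (simp add: autlev_1)

lemma inJ_2: "inJ p q 2 g \<longleftrightarrow> (\<exists>f e. g = AN f (AN e AE AE) (AN e AE AE))"
  by (cases g) (auto simp: numeral_2_eq_2 autlev_1)

lemma J_hom_1: "J_hom p q 1"
  unfolding J_hom_def inJ_1 by (auto simp: dmul_def)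

lemma J_hom_2: "J_hom p q 2"
  unfolding J_hom_def inJ_2 by (auto simp: numeral_2_eq_2 dmul_def cong_def)

lemma inJ_amult_Suc:
  assumes k: "2 \<le> k" and hom: "J_hom p q k"
    and g: "inJ p q (Suc k) g" and h: "inJ p q (Suc k) h"
  shows "inJ p q (Suc k) (amult g h)"
proof -
  let ?M = "2 ^ (k div 2) :: int" and ?D = "Delta p q k"
  let ?U = "if af g then aR h else aL h" and ?V = "if af g then aL h else aR h"
  have gJ: "g \<noteq> AE" "inJ p q k (aL g)" "inJ p q k (aR g)"
    and g_compat: "deq ?M (?D (aL g)) (Phi p q (?D (aR g)))"
    using g k by (simp_all add: inJ_Suc)
  have hJ: "h \<noteq> AE" "inJ p q k ?U" "inJ p q k ?V"
    using h k by (simp_all add: inJ_Suc)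
  have UV_compat: "deq ?M (?D ?U) (Phi p q (?D ?V))"
  proof -
    have "deq ?M (?D (aL h)) (Phi p q (?D (aR h)))"
      using h k by (simp add: inJ_Suc)
    moreover from deq_Phi[OF this, of p q]
    have "deq ?M (?D (aR h)) (Phi p q (?D (aL h)))"
      by (simp add: deq_sym)
    ultimately show ?thesis
      by simp
  qed
  have "deq ?M (?D (amult (aL g) ?U)) (dmul (?D (aL g)) (?D ?U))"
    using J_homD(3)[OF hom gJ(2) hJ(2)] .
  also have "deq ?M \<dots> (dmul (Phi p q (?D (aR g))) (Phi p q (?D ?V)))"
    using deq_dmul[OF g_compat UV_compat] .
  also have "\<dots> = Phi p q (dmul (?D (aR g)) (?D ?V))"
    by (simp add: Phi_dmul)
  also have "deq ?M \<dots> (Phi p q (?D (amult (aR g) ?V)))"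
    using deq_Phi[OF deq_sym[OF J_homD(3)[OF hom gJ(3) hJ(3)]]] .
  finally show ?thesis
    using k gJ hJ J_homD(1)[OF hom] by (simp add: inJ_Suc amult_not_AE)
qed

definition J_invariants :: "nat \<Rightarrow> nat \<Rightarrow> nat \<Rightarrow> aut \<Rightarrow> int \<Rightarrow> bool \<times> int \<Rightarrow> bool" where
  "J_invariants p q n g x d \<longleftrightarrow> inJ p q n g \<and> [psi p q n g = x] (mod 2 ^ (n div 2))
     \<and> deq (2 ^ (n div 2)) (Delta p q n g) d"

lemma fst_Delta [simp]: "fst (Delta p q n g) = af g"
  by (cases "(p, q, n, g)" rule: Delta.cases) simp_all

context
  fixes p q :: nat
  assumes odd_sum: "odd (p + q)"
begin

abbreviation \<sigma> :: int where "\<sigma> \<equiv> int p + int q"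

abbreviation \<gamma> :: int where "\<gamma> \<equiv> \<sigma> * (int p - int q)"

lemma odd_\<sigma>: "odd \<sigma>"
  using odd_sum by (metis even_of_nat of_nat_add)

lemma coprime_\<sigma>: "coprime \<sigma> (2 ^ k)"
  using odd_\<sigma> by simp

lemma psi_odd_level_cong:
  assumes "even k" "2 \<le> k"
  shows "[psi p q (Suc k) g = x] (mod 2 ^ (k div 2)) \<longleftrightarrow>
    [\<sigma> * x = psi p q k (aL g) + psi p q k (aR g)] (mod 2 ^ (k div 2))"
  using assms by (simp add: psi_odd_level zdiv_cong_iff[OF odd_\<sigma>])

lemma psi_even_level_cong:
  assumes "even k" "2 \<le> k"
  shows "[psi p q (Suc (Suc k)) g = x] (mod 2 * 2 ^ (k div 2)) \<longleftrightarrow>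
    [\<sigma>\<^sup>2 * x = 2 * left_grandchildren_psi p q k g - (if af (aL g) then \<gamma> else 0)]
      (mod 2 * 2 ^ (k div 2))"
  using assms zdiv_cong_iff[of "\<sigma>\<^sup>2" "Suc (k div 2)"] odd_\<sigma>
  by (simp add: psi_even_level del: even_add)

lemma Delta_compat_odd_level:
  assumes "even k" "2 \<le> k" "deq M (Delta p q (Suc k) a) (Phi p q (Delta p q (Suc k) b))"
  shows "af a = af b"
    and "[psi p q k (aR a) + psi p q k (aR b)
          = psi p q k (aL a) + psi p q k (aL b) - (if af a then \<gamma> else 0)] (mod M)"
proof -
  show "af a = af b"
    using assms by (simp add: Delta_odd_level Phi_def)
  have "[psi p q k (aL a) - psi p q k (aR a)
         = (if af b then \<gamma> else 0) - (psi p q k (aL b) - psi p q k (aR b))] (mod M)"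
    using assms by (simp add: Delta_odd_level Phi_def)
  then show "[psi p q k (aR a) + psi p q k (aR b)
          = psi p q k (aL a) + psi p q k (aL b) - (if af a then \<gamma> else 0)] (mod M)"
    using \<open>af a = af b\<close> by (simp add: cong_iff_dvd_diff dvd_diff_commute algebra_simps)
qed

lemma J_hom_odd_level:
  assumes k: "even k" "2 \<le> k" and hom: "J_hom p q k"
  shows "J_hom p q (Suc k)"
  unfolding J_hom_def
proof (intro allI impI conjI)
  fix g h
  assume g: "inJ p q (Suc k) g" and h: "inJ p q (Suc k) h"
  let ?M = "2 ^ (k div 2) :: int" and ?P = "psi p q k"
  let ?U = "if af g then aR h else aL h" and ?V = "if af g then aL h else aR h"
  have gJ: "g \<noteq> AE" "inJ p q k (aL g)" "inJ p q k (aR g)"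
    and hJ: "h \<noteq> AE" "inJ p q k ?U" "inJ p q k ?V"
    using g h k by (simp_all add: inJ_Suc)
  have gh: "amult g h = AN (af g \<noteq> af h) (amult (aL g) ?U) (amult (aR g) ?V)"
    using gJ(1) hJ(1) by (rule amult_not_AE)
  have x1: "[?P (amult (aL g) ?U) = ?P (aL g) + ?P ?U] (mod ?M)"
    and x2: "[?P (amult (aR g) ?V) = ?P (aR g) + ?P ?V] (mod ?M)"
    using J_homD(2)[OF hom] gJ hJ by blast+
  show "inJ p q (Suc k) (amult g h)"
    using inJ_amult_Suc[OF k(2) hom g h] .
  have "[\<sigma> * (psi p q (Suc k) g + psi p q (Suc k) h)
         = (?P (aL g) + ?P (aR g)) + (?P (aL h) + ?P (aR h))] (mod ?M)"
    unfolding distrib_left using psi_odd_level_cong[OF k] by (blast intro: cong_add cong_refl)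
  also have "(?P (aL g) + ?P (aR g)) + (?P (aL h) + ?P (aR h))
      = (?P (aL g) + ?P ?U) + (?P (aR g) + ?P ?V)"
    by simp
  finally have "[\<sigma> * (psi p q (Suc k) g + psi p q (Suc k) h)
      = ?P (amult (aL g) ?U) + ?P (amult (aR g) ?V)] (mod ?M)"
    using cong_sym[OF cong_add[OF x1 x2]] by (rule cong_trans)
  then show "[psi p q (Suc k) (amult g h) = psi p q (Suc k) g + psi p q (Suc k) h]
      (mod 2 ^ (Suc k div 2))"
    using k by (simp add: psi_odd_level_cong gh)
  have "[?P (amult (aL g) ?U) - ?P (amult (aR g) ?V)
         = (?P (aL g) - ?P (aR g)) + (if af g then - (?P (aL h) - ?P (aR h)) else ?P (aL h) - ?P (aR h))]
        (mod ?M)"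
    using cong_diff[OF x1 x2] by (cases "af g") (simp_all add: algebra_simps)
  then show "deq (2 ^ (Suc k div 2)) (Delta p q (Suc k) (amult g h))
      (dmul (Delta p q (Suc k) g) (Delta p q (Suc k) h))"
    using k by (cases "af g") (simp_all add: Delta_odd_level gh dmul_def)
qed

lemma psi_even_level_children:
  assumes k: "even k" "2 \<le> k" and g: "inJ p q (Suc (Suc k)) g"
  shows "[\<sigma> * psi p q (Suc (Suc k)) g = psi p q (Suc k) (aL g) + psi p q (Suc k) (aR g)]
    (mod 2 ^ (k div 2))"
proof -
  let ?M = "2 ^ (k div 2) :: int" and ?P = "psi p q k" and ?a = "aL g" and ?b = "aR g"
  have "deq ?M (Delta p q (Suc k) ?a) (Phi p q (Delta p q (Suc k) ?b))"
    using g k by (simp add: inJ_Suc)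
  then have compat: "[?P (aR ?a) + ?P (aR ?b) = ?P (aL ?a) + ?P (aL ?b) - (if af ?a then \<gamma> else 0)]
      (mod ?M)"
    using Delta_compat_odd_level(2)[OF k] by blast
  have "[\<sigma>\<^sup>2 * psi p q (Suc (Suc k)) g
      = 2 * left_grandchildren_psi p q k g - (if af ?a then \<gamma> else 0)] (mod 2 * ?M)"
    using psi_even_level_cong[OF k, THEN iffD1, OF cong_refl] .
  then have "[\<sigma> * (\<sigma> * psi p q (Suc (Suc k)) g)
      = 2 * left_grandchildren_psi p q k g - (if af ?a then \<gamma> else 0)] (mod 2 * ?M)"
    by (simp add: power2_eq_square mult.assoc)
  then have "[\<sigma> * (\<sigma> * psi p q (Suc (Suc k)) g)
      = 2 * left_grandchildren_psi p q k g - (if af ?a then \<gamma> else 0)] (mod ?M)"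
    by (rule cong_dvd_modulus) simp
  also have "[2 * left_grandchildren_psi p q k g - (if af ?a then \<gamma> else 0)
      = (?P (aL ?a) + ?P (aR ?a)) + (?P (aL ?b) + ?P (aR ?b))] (mod ?M)"
    using cong_add[OF cong_refl[of "?P (aL ?a) + ?P (aL ?b)"] cong_sym[OF compat]]
    by (simp add: left_grandchildren_psi_def algebra_simps)
  also have "[(?P (aL ?a) + ?P (aR ?a)) + (?P (aL ?b) + ?P (aR ?b))
      = \<sigma> * (psi p q (Suc k) ?a + psi p q (Suc k) ?b)] (mod ?M)"
    unfolding distrib_left
    using cong_add[OF psi_odd_level_cong[OF k, THEN iffD1, OF cong_refl]
        psi_odd_level_cong[OF k, THEN iffD1, OF cong_refl]]
    by (rule cong_sym)
  finally show ?thesis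
    using cong_mult_lcancel[OF coprime_\<sigma>] by blast
qed

lemma af_children_even_level:
  assumes k: "even k" "2 \<le> k" and h: "inJ p q (Suc (Suc k)) h"
  shows "af (aR h) = af (aL h)"
proof -
  have "deq (2 ^ (k div 2)) (Delta p q (Suc k) (aL h)) (Phi p q (Delta p q (Suc k) (aR h)))"
    using h k by (simp add: inJ_Suc)
  then show ?thesis
    using Delta_compat_odd_level(1)[OF k] by metis
qed

lemma left_grandchildren_psi_amult:
  assumes k: "even k" "2 \<le> k" and hom: "J_hom p q k"
    and g: "inJ p q (Suc (Suc k)) g" and h: "inJ p q (Suc (Suc k)) h"
  shows "[left_grandchildren_psi p q k (amult g h)
      = left_grandchildren_psi p q k g + left_grandchildren_psi p q k h
        - (if af (aL g) \<and> af (aL h) then \<gamma> else 0)] (mod 2 ^ (k div 2))"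
proof -
  let ?M = "2 ^ (k div 2) :: int" and ?P = "psi p q k" and ?L = "left_grandchildren_psi p q k"
  let ?a = "aL g" and ?b = "aR g"
  let ?U = "if af g then aR h else aL h" and ?V = "if af g then aL h else aR h"
  have J1: "?a \<noteq> AE" "?b \<noteq> AE" "?U \<noteq> AE" "?V \<noteq> AE"
    and J2: "inJ p q k (aL ?a)" "inJ p q k (aL ?b)" "inJ p q k (aL ?U)" "inJ p q k (aR ?U)"
      "inJ p q k (aL ?V)" "inJ p q k (aR ?V)"
    using g h k by (simp_all add: inJ_Suc)
  note flip_ab = af_children_even_level[OF k g]
  have "deq ?M (Delta p q (Suc k) (aL h)) (Phi p q (Delta p q (Suc k) (aR h)))"
    using h k by (simp add: inJ_Suc)
  then have compat_h: "[?P (aR (aL h)) + ?P (aR (aR h)) = ?L h - (if af (aL h) then \<gamma> else 0)]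
      (mod ?M)"
    using Delta_compat_odd_level(2)[OF k] by (simp add: left_grandchildren_psi_def)
  have gh: "amult g h = AN (af g \<noteq> af h) (amult ?a ?U) (amult ?b ?V)"
    using g h k by (simp add: inJ_Suc amult_not_AE)
  have "[?L (amult g h) = (?P (aL ?a) + ?P (if af ?a then aR ?U else aL ?U))
      + (?P (aL ?b) + ?P (if af ?a then aR ?V else aL ?V))] (mod ?M)"
    unfolding left_grandchildren_psi_def gh using J1 J2 flip_ab
    by (auto simp: amult_not_AE intro!: cong_add J_homD(2)[OF hom])
  also have "(?P (aL ?a) + ?P (if af ?a then aR ?U else aL ?U))
      + (?P (aL ?b) + ?P (if af ?a then aR ?V else aL ?V))
      = ?L g + (if af ?a then ?P (aR (aL h)) + ?P (aR (aR h)) else ?L h)"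
    by (cases "af g"; cases "af ?a") (simp_all add: left_grandchildren_psi_def)
  also have "[?L g + (if af ?a then ?P (aR (aL h)) + ?P (aR (aR h)) else ?L h)
      = ?L g + (if af ?a then ?L h - (if af (aL h) then \<gamma> else 0) else ?L h)] (mod ?M)"
    using compat_h by (auto intro: cong_add)
  finally show ?thesis
    by (cases "af ?a"; cases "af (aL h)") (simp_all add: algebra_simps)
qed

lemma psi_amult_even_level:
  assumes k: "even k" "2 \<le> k" and hom: "J_hom p q k"
    and g: "inJ p q (Suc (Suc k)) g" and h: "inJ p q (Suc (Suc k)) h"
  shows "[psi p q (Suc (Suc k)) (amult g h) = psi p q (Suc (Suc k)) g + psi p q (Suc (Suc k)) h]
    (mod 2 * 2 ^ (k div 2))"
proof -
  let ?M = "2 ^ (k div 2) :: int" and ?L = "left_grandchildren_psi p q k"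
  let ?\<psi> = "psi p q (Suc (Suc k))"
  have "g \<noteq> AE" "h \<noteq> AE" "aL g \<noteq> AE" "aL h \<noteq> AE" "aR h \<noteq> AE"
    using g h k by (simp_all add: inJ_Suc)
  then have flip_gh: "af (aL (amult g h)) = (af (aL g) \<noteq> af (aL h))"
    using af_children_even_level[OF k h] by (simp add: amult_not_AE)
  have "[\<sigma>\<^sup>2 * (?\<psi> g + ?\<psi> h)
      = (2 * ?L g - (if af (aL g) then \<gamma> else 0)) + (2 * ?L h - (if af (aL h) then \<gamma> else 0))]
      (mod 2 * ?M)"
    unfolding distrib_left
    using cong_add[OF psi_even_level_cong[OF k, THEN iffD1, OF cong_refl]
        psi_even_level_cong[OF k, THEN iffD1, OF cong_refl]] .
  also have "(2 * ?L g - (if af (aL g) then \<gamma> else 0)) + (2 * ?L h - (if af (aL h) then \<gamma> else 0))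
      = 2 * (?L g + ?L h - (if af (aL g) \<and> af (aL h) then \<gamma> else 0))
        - (if af (aL g) \<noteq> af (aL h) then \<gamma> else 0)"
    by (cases "af (aL g)"; cases "af (aL h)") (simp_all add: algebra_simps)
  also have "[2 * (?L g + ?L h - (if af (aL g) \<and> af (aL h) then \<gamma> else 0))
        - (if af (aL g) \<noteq> af (aL h) then \<gamma> else 0)
      = 2 * ?L (amult g h) - (if af (aL (amult g h)) then \<gamma> else 0)] (mod 2 * ?M)"
    unfolding flip_gh
    using cong_cmult_leftI[OF left_grandchildren_psi_amult[OF k hom g h], of 2]
    by (intro cong_diff cong_refl) (rule cong_sym)
  finally show ?thesis
    using psi_even_level_cong[OF k] by blast
qed

lemma Delta_amult_even_level:
  assumes k: "even k" "2 \<le> k" and hom1: "J_hom p q (Suc k)"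
    and g: "inJ p q (Suc (Suc k)) g" and h: "inJ p q (Suc (Suc k)) h"
    and \<psi>_gh: "[psi p q (Suc (Suc k)) (amult g h) = psi p q (Suc (Suc k)) g + psi p q (Suc (Suc k)) h]
      (mod 2 * 2 ^ (k div 2))"
  shows "deq (2 * 2 ^ (k div 2)) (Delta p q (Suc (Suc k)) (amult g h))
    (dmul (Delta p q (Suc (Suc k)) g) (Delta p q (Suc (Suc k)) h))"
proof -
  let ?M = "2 ^ (k div 2) :: int" and ?\<psi> = "psi p q (Suc (Suc k))" and ?P = "psi p q (Suc k)"
  let ?V = "if af g then aL h else aR h"
  have gJ: "g \<noteq> AE" "inJ p q (Suc k) (aR g)" and hJ: "h \<noteq> AE" "inJ p q (Suc k) ?V"
    using g h k by (simp_all add: inJ_Suc)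
  then have gh: "af (amult g h) = (af g \<noteq> af h)" "aR (amult g h) = amult (aR g) ?V"
    by (simp_all add: amult_not_AE)
  have A: "[\<sigma> * ?\<psi> (amult g h) = \<sigma> * ?\<psi> g + \<sigma> * ?\<psi> h] (mod 2 * ?M)"
    using cong_scalar_left[OF \<psi>_gh] by (simp add: distrib_left)
  have B: "[2 * ?P (amult (aR g) ?V) = 2 * ?P (aR g) + 2 * ?P ?V] (mod 2 * ?M)"
    using cong_cmult_leftI[OF J_homD(2)[OF hom1 gJ(2) hJ(2)], of 2] k by (simp add: distrib_left)
  \<comment> \<open>Doubling lifts psi_even_level_children to the modulus of level k + 2.\<close>
  have C: "[2 * (\<sigma> * ?\<psi> h) = 2 * ?P (aL h) + 2 * ?P (aR h)] (mod 2 * ?M)"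
    using cong_cmult_leftI[OF psi_even_level_children[OF k h], of 2] k
    by (simp add: distrib_left)
  have "[\<sigma> * ?\<psi> (amult g h) - 2 * ?P (amult (aR g) ?V)
      = (\<sigma> * ?\<psi> g - 2 * ?P (aR g))
        + (if af g then - (\<sigma> * ?\<psi> h - 2 * ?P (aR h)) else \<sigma> * ?\<psi> h - 2 * ?P (aR h))]
      (mod 2 * ?M)"
  proof (cases "af g")
    case True
    have "[2 * ?P (aL h) + 2 * ?P (aR h) - 2 * (\<sigma> * ?\<psi> h) = 0] (mod 2 * ?M)"
      using cong_diff[OF cong_sym[OF C] cong_refl[of "2 * (\<sigma> * ?\<psi> h)"]] by simp
    from cong_add[OF cong_diff[OF A B] cong_sym[OF this]] True show ?thesis
      by (simp add: algebra_simps)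
  next
    case False
    then show ?thesis
      using cong_diff[OF A B] by (simp add: algebra_simps)
  qed
  then show ?thesis
    using k by (cases "af g") (simp_all add: Delta_even_level gh dmul_def)
qed

lemma J_hom_even_level:
  assumes k: "even k" "2 \<le> k" and hom: "J_hom p q k" and hom1: "J_hom p q (Suc k)"
  shows "J_hom p q (Suc (Suc k))"
  unfolding J_hom_def
proof (intro allI impI conjI)
  fix g h
  assume g: "inJ p q (Suc (Suc k)) g" and h: "inJ p q (Suc (Suc k)) h"
  show "inJ p q (Suc (Suc k)) (amult g h)"
    using inJ_amult_Suc[of "Suc k"] k hom1 g h by simp
  have \<psi>_gh: "[psi p q (Suc (Suc k)) (amult g h) = psi p q (Suc (Suc k)) g + psi p q (Suc (Suc k)) h]
      (mod 2 * 2 ^ (k div 2))"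
    using psi_amult_even_level[OF k hom g h] .
  then show "[psi p q (Suc (Suc k)) (amult g h) = psi p q (Suc (Suc k)) g + psi p q (Suc (Suc k)) h]
      (mod 2 ^ (Suc (Suc k) div 2))"
    by simp
  show "deq (2 ^ (Suc (Suc k) div 2)) (Delta p q (Suc (Suc k)) (amult g h))
      (dmul (Delta p q (Suc (Suc k)) g) (Delta p q (Suc (Suc k)) h))"
    using Delta_amult_even_level[OF k hom1 g h \<psi>_gh] by simp
qed

lemma level_cases:
  assumes "1 \<le> n"
  obtains "n = 1" | "n = 2"
    | k where "n = Suc k" "even k" "2 \<le> k"
    | k where "n = Suc (Suc k)" "even k" "2 \<le> k"
proof (cases "n \<le> 2")
  case True
  then show ?thesis
    using assms that(1,2) by linarith
next
  case False
  then show ?thesis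
    using that(3)[of "n - 1"] that(4)[of "n - 2"] by (cases "even n") auto
qed

lemma J_hom_level: "1 \<le> n \<Longrightarrow> J_hom p q n"
proof (induction n rule: less_induct)
  case (less n)
  from less.prems show ?case
  proof (cases rule: level_cases)
    case 1
    then show ?thesis
      using J_hom_1 by blast
  next
    case 2
    then show ?thesis
      using J_hom_2 by blast
  next
    case (3 k)
    then show ?thesis
      using J_hom_odd_level less.IH by simp
  next
    case (4 k)
    then show ?thesis
      using J_hom_even_level less.IH by simp
  qed
qed

lemma J_invariants_amult:
  assumes "1 \<le> n" "J_invariants p q n g x d" "J_invariants p q n h y e"
  shows "J_invariants p q n (amult g h) (x + y) (dmul d e)"
  using assms J_homD[OF J_hom_level[OF assms(1)]] unfolding J_invariants_def
  by (meson cong_add cong_trans deq_dmul deq_trans)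

lemma inJ_AN:
  assumes "2 \<le> k" "J_invariants p q k a x d" "J_invariants p q k b y e"
    and "deq (2 ^ (k div 2)) d (Phi p q e)"
  shows "inJ p q (Suc k) (AN f a b)"
proof -
  have "deq (2 ^ (k div 2)) (Delta p q k a) (Phi p q (Delta p q k b))"
    using assms deq_Phi[of "2 ^ (k div 2)" "Delta p q k b" e p q]
    unfolding J_invariants_def by (meson deq_sym deq_trans)
  then show ?thesis
    using assms by (simp add: inJ_Suc J_invariants_def)
qed

lemma J_invariants_odd_level:
  assumes k: "even k" "2 \<le> k"
    and a: "J_invariants p q k a xa da" and b: "J_invariants p q k b xb db"
    and compat: "deq (2 ^ (k div 2)) da (Phi p q db)"
    and x: "[\<sigma> * x = xa + xb] (mod 2 ^ (k div 2))"
  shows "J_invariants p q (Suc k) (AN f a b) x (f, xa - xb)"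
proof -
  have sum: "[psi p q k a + psi p q k b = xa + xb] (mod 2 ^ (k div 2))"
    and diff: "[psi p q k a - psi p q k b = xa - xb] (mod 2 ^ (k div 2))"
    using a b unfolding J_invariants_def by (blast intro: cong_add cong_diff)+
  have "[psi p q (Suc k) (AN f a b) = x] (mod 2 ^ (k div 2))"
    unfolding psi_odd_level_cong[OF k] using cong_trans[OF x cong_sym[OF sum]] by simp
  then show ?thesis
    using inJ_AN[OF k(2) a b compat] diff k by (simp add: J_invariants_def Delta_odd_level)
qed

lemma J_invariants_even_level:
  assumes k: "even k" "2 \<le> k"
    and a: "J_invariants p q (Suc k) a xa da" and b: "J_invariants p q (Suc k) b xb db"
    and compat: "deq (2 ^ (k div 2)) da (Phi p q db)"
    and l: "[psi p q k (aL a) + psi p q k (aL b) = l] (mod 2 ^ (k div 2))"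
    and x: "[\<sigma>\<^sup>2 * x = 2 * l - (if fst da then \<gamma> else 0)] (mod 2 * 2 ^ (k div 2))"
  shows "J_invariants p q (Suc (Suc k)) (AN f a b) x (f, \<sigma> * x - 2 * xb)"
proof -
  let ?M = "2 ^ (k div 2) :: int"
  have "af a = fst da"
    using a unfolding J_invariants_def by (metis deq_def fst_Delta)
  moreover have "[2 * l = 2 * left_grandchildren_psi p q k (AN f a b)] (mod 2 * ?M)"
    using cong_cmult_leftI[OF cong_sym[OF l], of 2] by (simp add: left_grandchildren_psi_def)
  ultimately have "[\<sigma>\<^sup>2 * x = 2 * left_grandchildren_psi p q k (AN f a b)
      - (if af (aL (AN f a b)) then \<gamma> else 0)] (mod 2 * ?M)"
    using cong_trans[OF x cong_diff[OF _ cong_refl]] by simp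
  then have \<psi>: "[psi p q (Suc (Suc k)) (AN f a b) = x] (mod 2 * ?M)"
    using psi_even_level_cong[OF k] by blast
  have "[2 * psi p q (Suc k) b = 2 * xb] (mod 2 * ?M)"
    using b k cong_cmult_leftI[of "psi p q (Suc k) b" xb ?M 2] by (simp add: J_invariants_def)
  then have "[\<sigma> * psi p q (Suc (Suc k)) (AN f a b) - 2 * psi p q (Suc k) b = \<sigma> * x - 2 * xb]
      (mod 2 * ?M)"
    using cong_diff[OF cong_scalar_left[OF \<psi>]] by blast
  moreover have "inJ p q (Suc (Suc k)) (AN f a b)"
    using inJ_AN[of "Suc k"] a b compat k by simp
  ultimately show ?thesis
    using \<psi> k by (simp add: J_invariants_def Delta_even_level)
qed

lemma J_invariants_aid: "1 \<le> n \<Longrightarrow> J_invariants p q n (aid n) 0 (False, 0)"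
proof (induction n rule: less_induct)
  case (less n)
  from less.prems show ?case
  proof (cases rule: level_cases)
    case 1
    then show ?thesis
      by (simp add: J_invariants_def)
  next
    case 2
    then show ?thesis
      by (simp add: J_invariants_def numeral_2_eq_2)
  next
    case (3 k)
    then show ?thesis
      using J_invariants_odd_level[of k "aid k" 0 "(False, 0)" "aid k" 0 "(False, 0)" 0]
        less.IH[of k] by (simp add: Phi_def)
  next
    case (4 k)
    have "[psi p q k (aL (aid (Suc k))) + psi p q k (aL (aid (Suc k))) = 0] (mod 2 ^ (k div 2))"
      using less.IH[of k] 4 cong_add[of "psi p q k (aid k)" 0 _ "psi p q k (aid k)" 0]
      by (simp add: J_invariants_def)
    then show ?thesis
      using J_invariants_even_level[of k "aid (Suc k)" 0 "(False, 0)" "aid (Suc k)" 0 "(False, 0)" 0 0]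
        less.IH[of "Suc k"] 4 by (simp add: Phi_def)
  qed
qed

lemma J_invariants_apow:
  assumes "1 \<le> n" "J_invariants p q n g x (True, d)"
  shows "J_invariants p q n (apow n g r) (int r * x) (odd r, if odd r then d else 0)"
proof (induction r)
  case 0
  then show ?case
    using J_invariants_aid[OF assms(1)] by simp
next
  case (Suc r)
  have "dmul (True, d) (odd r, if odd r then d else 0) = (odd (Suc r), if odd (Suc r) then d else 0)"
    by (simp add: dmul_def)
  then show ?case
    using J_invariants_amult[OF assms Suc.IH] by (simp add: algebra_simps)
qed

lemma inJ_apow:
  assumes "1 \<le> n" "inJ p q n g"
  shows "inJ p q n (apow n g r)"
  using J_invariants_aid[OF assms(1)] J_homD(1)[OF J_hom_level[OF assms(1)] assms(2)]
  by (induction r) (auto simp: J_invariants_def)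

lemma psi_children_apow:
  assumes k: "2 \<le> k" and A: "inJ p q (Suc k) A" "af A"
    and u: "[psi p q k (aL A) = u] (mod 2 ^ (k div 2))"
    and v: "[psi p q k (aR A) = v] (mod 2 ^ (k div 2))"
  shows "[psi p q k (aL (apow (Suc k) A r)) = int (r div 2) * (u + v) + (if odd r then u else 0)]
      (mod 2 ^ (k div 2))"
    and "[psi p q k (aR (apow (Suc k) A r)) = int (r div 2) * (u + v) + (if odd r then v else 0)]
      (mod 2 ^ (k div 2))"
proof (induction r)
  case 0
  have "[psi p q k (aid k) = 0] (mod 2 ^ (k div 2))"
    using J_invariants_aid[of k] k by (simp add: J_invariants_def)
  then show "[psi p q k (aL (apow (Suc k) A 0)) = int (0 div 2) * (u + v) + (if odd 0 then u else 0)]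
      (mod 2 ^ (k div 2))"
    and "[psi p q k (aR (apow (Suc k) A 0)) = int (0 div 2) * (u + v) + (if odd 0 then v else 0)]
      (mod 2 ^ (k div 2))"
    by simp_all
next
  case (Suc r)
  let ?Ar = "apow (Suc k) A r"
  have "inJ p q (Suc k) ?Ar"
    using inJ_apow A(1) by simp
  then have "?Ar \<noteq> AE" "inJ p q k (aL ?Ar)" "inJ p q k (aR ?Ar)"
    and "A \<noteq> AE" "inJ p q k (aL A)" "inJ p q k (aR A)"
    using A(1) k by (simp_all add: inJ_Suc)
  then have L: "[psi p q k (aL (apow (Suc k) A (Suc r))) = psi p q k (aL A) + psi p q k (aR ?Ar)]
      (mod 2 ^ (k div 2))"
    and R: "[psi p q k (aR (apow (Suc k) A (Suc r))) = psi p q k (aR A) + psi p q k (aL ?Ar)]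
      (mod 2 ^ (k div 2))"
    using J_homD(2)[OF J_hom_level] A(2) k by (simp_all add: amult_not_AE)
  have "u + (int (r div 2) * (u + v) + (if odd r then v else 0))
      = int (Suc r div 2) * (u + v) + (if odd (Suc r) then u else 0)"
    and "v + (int (r div 2) * (u + v) + (if odd r then u else 0))
      = int (Suc r div 2) * (u + v) + (if odd (Suc r) then v else 0)"
    by (cases "odd r"; simp add: algebra_simps)+
  with cong_trans[OF L cong_add[OF u Suc.IH(2)]] cong_trans[OF R cong_add[OF v Suc.IH(1)]]
  show "[psi p q k (aL (apow (Suc k) A (Suc r))) = int (Suc r div 2) * (u + v)
      + (if odd (Suc r) then u else 0)] (mod 2 ^ (k div 2))"
    and "[psi p q k (aR (apow (Suc k) A (Suc r))) = int (Suc r div 2) * (u + v)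
      + (if odd (Suc r) then v else 0)] (mod 2 ^ (k div 2))"
    by simp_all
qed

lemma Phi_brk_children:
  "Phi p q (b, if b then int q * (int p - int q) else 0) = (b, if b then int p * (int p - int q) else 0)"
  by (simp add: Phi_def algebra_simps)

lemma brk_odd_level:
  assumes k: "even k" "2 \<le> k"
    and A: "J_invariants p q k (brk p q p k) (int p) (True, int p * (int p - int q))"
    and B: "J_invariants p q k (brk p q q k) (int q) (True, int q * (int p - int q))"
  shows "J_invariants p q (Suc k) (brk p q r (Suc k)) (int r) (True, int r * (int p - int q))"
proof -
  have k1: "1 \<le> k"
    using k by simp
  have "J_invariants p q (Suc k) (AN True (apow k (brk p q p k) r) (apow k (brk p q q k) r)) (int r)
      (True, int r * int p - int r * int q)"
    by (rule J_invariants_odd_level[OF k J_invariants_apow[OF k1 A] J_invariants_apow[OF k1 B]])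
      (simp_all add: Phi_brk_children algebra_simps)
  moreover have "brk p q r (Suc k) = AN True (apow k (brk p q p k) r) (apow k (brk p q q k) r)"
    using k by (cases k) auto
  ultimately show ?thesis
    by (simp add: algebra_simps)
qed

lemma yel_odd_level:
  assumes k: "even k" "2 \<le> k"
    and A: "J_invariants p q k (brk p q p k) (int p) (True, int p * (int p - int q))"
    and B: "J_invariants p q k (brk p q q k) (int q) (True, int q * (int p - int q))"
  shows "J_invariants p q (Suc k) (yel p q (Suc k)) 1 (False, int p - int q)"
proof -
  have "J_invariants p q (Suc k) (AN False (brk p q p k) (brk p q q k)) 1 (False, int p - int q)"
    by (rule J_invariants_odd_level[OF k A B]) (use Phi_brk_children[of True] in simp_all)
  then show ?thesis
    using k by (simp add: yel_def)
qed

lemma psi_children_brk: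
  assumes k: "1 \<le> k"
    and A: "J_invariants p q k (brk p q p k) (int p) (True, int p * (int p - int q))"
    and B: "J_invariants p q k (brk p q q k) (int q) (True, int q * (int p - int q))"
  shows "[psi p q k (aL (brk p q s (Suc k))) = int s * int p] (mod 2 ^ (k div 2))"
    and "[psi p q k (aR (brk p q s (Suc k))) = int s * int q] (mod 2 ^ (k div 2))"
proof -
  have "brk p q s (Suc k) = AN True (apow k (brk p q p k) s) (apow k (brk p q q k) s)"
    using k by (cases k) auto
  then show "[psi p q k (aL (brk p q s (Suc k))) = int s * int p] (mod 2 ^ (k div 2))"
    and "[psi p q k (aR (brk p q s (Suc k))) = int s * int q] (mod 2 ^ (k div 2))"
    using J_invariants_apow[OF k A] J_invariants_apow[OF k B] by (simp_all add: J_invariants_def)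
qed

lemma brk_even_level:
  assumes k: "even k" "2 \<le> k"
    and A0: "J_invariants p q k (brk p q p k) (int p) (True, int p * (int p - int q))"
    and B0: "J_invariants p q k (brk p q q k) (int q) (True, int q * (int p - int q))"
    and A: "J_invariants p q (Suc k) (brk p q p (Suc k)) (int p) (True, int p * (int p - int q))"
    and B: "J_invariants p q (Suc k) (brk p q q (Suc k)) (int q) (True, int q * (int p - int q))"
  shows "J_invariants p q (Suc (Suc k)) (brk p q r (Suc (Suc k))) (int r)
    (True, int r * (int p - int q))"
proof -
  let ?M = "2 ^ (k div 2) :: int" and ?A = "brk p q p (Suc k)" and ?B = "brk p q q (Suc k)"
  have k1: "1 \<le> k" "1 \<le> Suc k"
    using k by simp_all
  note grand = psi_children_brk[OF k1(1) A0 B0]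
  have "af ?A" "af ?B"
    using k by (cases k; simp)+
  moreover have "inJ p q (Suc k) ?A" "inJ p q (Suc k) ?B"
    using A B by (simp_all add: J_invariants_def)
  ultimately have "[psi p q k (aL (apow (Suc k) ?A r)) + psi p q k (aL (apow (Suc k) ?B r))
      = (int (r div 2) * (int p * int p + int p * int q) + (if odd r then int p * int p else 0))
        + (int (r div 2) * (int q * int p + int q * int q) + (if odd r then int q * int p else 0))]
      (mod ?M)"
    using psi_children_apow(1)[OF k(2) _ _ grand] by (intro cong_add)
  moreover have "\<sigma>\<^sup>2 * int r
      = 2 * ((int (r div 2) * (int p * int p + int p * int q) + (if odd r then int p * int p else 0))
        + (int (r div 2) * (int q * int p + int q * int q) + (if odd r then int q * int p else 0)))
        - (if odd r then \<gamma> else 0)"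
    by (cases "odd r") (auto elim!: oddE evenE simp: power2_eq_square algebra_simps)
  ultimately have "J_invariants p q (Suc (Suc k)) (AN True (apow (Suc k) ?A r) (apow (Suc k) ?B r))
      (int r) (True, \<sigma> * int r - 2 * (int r * int q))"
    using J_invariants_even_level[OF k J_invariants_apow[OF k1(2) A] J_invariants_apow[OF k1(2) B]]
    by (simp add: Phi_brk_children)
  then show ?thesis
    by (simp add: algebra_simps)
qed

lemma yel_even_level:
  assumes k: "even k" "2 \<le> k"
    and A0: "J_invariants p q k (brk p q p k) (int p) (True, int p * (int p - int q))"
    and B0: "J_invariants p q k (brk p q q k) (int q) (True, int q * (int p - int q))"
    and A: "J_invariants p q (Suc k) (brk p q p (Suc k)) (int p) (True, int p * (int p - int q))"
    and B: "J_invariants p q (Suc k) (brk p q q (Suc k)) (int q) (True, int q * (int p - int q))"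
  shows "J_invariants p q (Suc (Suc k)) (yel p q (Suc (Suc k))) 1 (False, int p - int q)"
proof -
  let ?A = "brk p q p (Suc k)" and ?B = "brk p q q (Suc k)"
  have "J_invariants p q (Suc (Suc k)) (AN False ?A ?B) 1 (False, \<sigma> * 1 - 2 * int q)"
  proof (rule J_invariants_even_level[OF k A B])
    have "1 \<le> k"
      using k by simp
    then show "[psi p q k (aL ?A) + psi p q k (aL ?B) = int p * int p + int q * int p]
        (mod 2 ^ (k div 2))"
      using psi_children_brk(1)[OF _ A0 B0] by (intro cong_add)
    show "[\<sigma>\<^sup>2 * 1 = 2 * (int p * int p + int q * int p)
        - (if fst (True, int p * (int p - int q)) then \<gamma> else 0)] (mod 2 * 2 ^ (k div 2))"
      by (simp add: power2_eq_square algebra_simps)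
  qed (use Phi_brk_children[of True] in simp)
  then show ?thesis
    by (simp add: yel_def)
qed

lemma brk_yel_level_2:
  "J_invariants p q 2 (brk p q r 2) (int r) (True, int r * (int p - int q))"
  "J_invariants p q 2 (yel p q 2) 1 (False, int p - int q)"
proof -
  have odd_diff: "odd (int p - int q)"
    using odd_\<sigma> by simp
  have flip_pow: "apow 1 (AN True AE AE) r = AN (odd r) AE AE"
    by (induction r) auto
  have "brk p q r 2 = AN True (AN (odd r) AE AE) (AN (odd r) AE AE)"
    using flip_pow by (simp add: numeral_2_eq_2)
  then show "J_invariants p q 2 (brk p q r 2) (int r) (True, int r * (int p - int q))"
    using odd_diff by (simp add: J_invariants_def inJ_2 numeral_2_eq_2 cong_iff_dvd_diff)
  show "J_invariants p q 2 (yel p q 2) 1 (False, int p - int q)"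
    using odd_diff by (simp add: J_invariants_def inJ_2 yel_def numeral_2_eq_2 cong_iff_dvd_diff)
qed

lemma brk_yel_invariants:
  "1 \<le> n \<Longrightarrow> (\<forall>r. J_invariants p q n (brk p q r n) (int r) (True, int r * (int p - int q)))
    \<and> J_invariants p q n (yel p q n) 1 (False, int p - int q)"
proof (induction n rule: less_induct)
  case (less n)
  from less.prems show ?case
  proof (cases rule: level_cases)
    case 1
    then show ?thesis
      by (simp add: J_invariants_def yel_def)
  next
    case 2
    then show ?thesis
      using brk_yel_level_2 by blast
  next
    case (3 k)
    then show ?thesis
      using brk_odd_level yel_odd_level less.IH[of k] by simp
  next
    case (4 k)
    then show ?thesis
      using brk_even_level yel_even_level less.IH[of k] less.IH[of "Suc k"] by simp
  qed
qed

end

theorem theorem2: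
  fixes p q n :: nat
  assumes "p > 0" and "q > 0" and "odd (p + q)" and "n \<ge> 1"
  shows "inJ p q n (yel p q n) \<and> inJ p q n (brk p q p n) \<and> inJ p q n (brk p q q n)
    \<and> [psi p q n (yel p q n) = 1] (mod 2 ^ (n div 2))
    \<and> [psi p q n (brk p q p n) = int p] (mod 2 ^ (n div 2))
    \<and> [psi p q n (brk p q q n) = int q] (mod 2 ^ (n div 2))
    \<and> deq (2 ^ (n div 2)) (Delta p q n (yel p q n)) (False, int p - int q)
    \<and> deq (2 ^ (n div 2)) (Delta p q n (brk p q p n)) (True, int p * (int p - int q))
    \<and> deq (2 ^ (n div 2)) (Delta p q n (brk p q q n)) (True, int q * (int p - int q))"
proof -
  have brk: "J_invariants p q n (brk p q r n) (int r) (True, int r * (int p - int q))"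
    and yel: "J_invariants p q n (yel p q n) 1 (False, int p - int q)" for r
    using brk_yel_invariants[OF assms(3,4)] by blast+
  show ?thesis
    using brk[of p] brk[of q] yel unfolding J_invariants_def by blast
qed

end
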